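(* Let $1/2\le\alpha\le 1$, let $n\ge 1$, and let $S$ be a set of $n$ points in $\mathbb{R}^2$ such that no line contains more than $n^{\alpha}$ points of $S$. Then the number of unordered pairs $\{p,q\}\subset S$ such that $|p-q|\in\mathbb{Q}$ and $\{p,q\}$ has rational angle is at most $4n^{1+\alpha}$.
   Context: Identify $\mathbb{R}^2$ with $\mathbb{C}$. A pair of distinct points $p,q$ has rational angle if the segment between them, viewed as the complex number $q-p=re^{\pi i\gamma}$ with $r>0$, has $\gamma\in\mathbb{Q}$; equivalently, the line through $p$ and $q$ makes an angle with the $x$-axis that is a rational multiple of $\pi$. *)

theory Defs
  imports "HOL-Analysis.Analysis"
begin

definition rational_angle :: "complex \<Rightarrow> complex \<Rightarrow> bool" where
  "rational_angle p q \<longleftrightarrow> p \<noteq> q \<and>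
     (\<exists>r::real. \<exists>\<gamma>::real. r > 0 \<and> \<gamma> \<in> \<rat> \<and>
        q - p = complex_of_real r * exp (complex_of_real (pi * \<gamma>) * \<i>))"

definition is_line :: "complex set \<Rightarrow> bool" where
  "is_line L \<longleftrightarrow> (\<exists>a d. d \<noteq> 0 \<and> L = {a + complex_of_real t * d | t. True})"

end

theory Submission
  imports Defs "HOL-Computational_Algebra.Computational_Algebra"
begin

text \<open>
  Let d(s) count the q in S for which q - s has rational length and rational angle. The pairs
  to be counted number half the sum of the d(s), and since a line through s meets S in at most
  n^\<alpha> points, there are at least d(s)(d(s) - n^\<alpha>) non-collinear triples (s, q1, q2) of this
  kind; by Cauchy-Schwarz it suffices to show that there are at most 38 n^2 such triples.

  So fix q1, q2 and call s an apex if q1, s, q2 are not collinear and s - q1, q2 - s are of this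
  kind. Two apexes s0, s give a vanishing sum (s0 - q1) + (q2 - s0) - (s - q1) - (q2 - s)
  of four rational multiples of roots of unity, with no vanishing proper subsum unless s is s0 or
  q1 + q2 - s0. By the four-term case of Mann's theorem all four directions then differ by sixth
  roots of unity, and as two non-parallel directions determine s, there are at most 36 + 2 apexes.

  Mann's theorem is proved one prime factor of the common order of the roots at a time, using
  that the conjugations \<zeta> \<mapsto> \<zeta>^k, k coprime to the order, preserve vanishing rational sums of
  powers of \<zeta> (irreducibility of cyclotomic polynomials, via g(x)^p = g(x^p) mod p).
\<close>

section \<open>Galois conjugates of roots of unity\<close>

definition ipoly :: "int poly \<Rightarrow> 'a::comm_ring_1 \<Rightarrow> 'a" where
  "ipoly g z = poly (map_poly of_int g) z"

lemma ipoly_0 [simp]: "ipoly 0 z = 0"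
  by (simp add: ipoly_def)

lemma ipoly_pCons [simp]: "ipoly (pCons a g) z = of_int a + z * ipoly g z"
  by (simp add: ipoly_def map_poly_pCons)

lemma ipoly_add [simp]: "ipoly (f + g) z = ipoly f z + ipoly g z"
proof -
  have "map_poly of_int (f + g) = map_poly of_int f + (map_poly of_int g :: 'a poly)"
    by (rule poly_eqI) (simp add: coeff_map_poly)
  then show ?thesis
    by (simp add: ipoly_def)
qed

lemma ipoly_minus [simp]: "ipoly (- f) z = - ipoly f z"
  by (induction f) simp_all

lemma ipoly_diff [simp]: "ipoly (f - g) z = ipoly f z - ipoly g z"
  using ipoly_add[of f "- g" z] by simp

lemma ipoly_smult [simp]: "ipoly (smult c f) z = of_int c * ipoly f z"
  by (induction f) (simp_all add: algebra_simps)

lemma ipoly_mult [simp]: "ipoly (f * g) z = ipoly f z * ipoly g z"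
  by (induction f) (simp_all add: algebra_simps)

lemma ipoly_1 [simp]: "ipoly 1 z = 1"
  by (simp add: ipoly_def)

lemma ipoly_of_nat [simp]: "ipoly (of_nat n) z = of_nat n"
  by (simp add: of_nat_poly)

lemma ipoly_monom [simp]: "ipoly (monom c n) z = of_int c * z ^ n"
  by (simp add: ipoly_def map_poly_monom poly_monom)

lemma ipoly_power [simp]: "ipoly (f ^ k) z = ipoly f z ^ k"
  by (induction k) simp_all

lemma ipoly_sum: "ipoly (\<Sum>i\<in>I. f i) z = (\<Sum>i\<in>I. ipoly (f i) z)"
  by (induction I rule: infinite_finite_induct) simp_all

lemma ipoly_pcompose [simp]: "ipoly (f \<circ>\<^sub>p g) z = ipoly f (ipoly g z)"
  by (induction f) (simp_all add: pcompose_pCons)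

lemma prime_dvd_power_add_sub:
  fixes a b :: "'a::comm_ring_1"
  assumes "prime p"
  shows "of_nat p dvd (a + b) ^ p - a ^ p - b ^ p"
proof -
  have p0: "p > 0"
    using assms prime_gt_0_nat by blast
  have "{..p} = insert 0 (insert p {1..<p})"
    using p0 by auto
  then have "(a + b) ^ p = b ^ p + a ^ p + (\<Sum>k\<in>{1..<p}. of_nat (p choose k) * a ^ k * b ^ (p - k))"
    using p0 by (simp add: binomial_ring)
  moreover have "of_nat p dvd (\<Sum>k\<in>{1..<p}. of_nat (p choose k) * a ^ k * (b ^ (p - k) :: 'a))"
  proof (intro dvd_sum dvd_mult2)
    fix k assume "k \<in> {1..<p}"
    then have "p dvd p choose k"
      using assms by (intro dvd_choose_prime) auto
    then show "of_nat p dvd (of_nat (p choose k) :: 'a)"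
      by (metis dvd_def of_nat_mult)
  qed
  ultimately show ?thesis
    by (simp add: algebra_simps)
qed

lemma prime_dvd_int_power_sub:
  fixes a :: int
  assumes "prime p"
  shows "int p dvd a ^ p - a"
proof (induction a rule: int_induct[where k = 0])
  case base
  have "p \<noteq> 0"
    using assms by auto
  then show ?case
    by (simp add: power_0_left)
next
  case (step1 i)
  have "(i + 1) ^ p - (i + 1) = ((i + 1) ^ p - i ^ p - 1 ^ p) + (i ^ p - i)"
    by simp
  then show ?case
    using dvd_add[OF prime_dvd_power_add_sub[OF assms, of i 1] step1.IH] by (simp only:)
next
  case (step2 i)
  have minus_one: "int p dvd (- 1) ^ p + 1"
  proof (cases "p = 2")
    case False
    then have "odd p"
      using assms prime_ge_2_nat[OF assms] by (intro prime_odd_nat) auto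
    then show ?thesis
      by simp
  qed simp
  have "(i - 1) ^ p - (i - 1) = ((i + - 1) ^ p - i ^ p - (- 1) ^ p) + (i ^ p - i) + ((- 1) ^ p + 1)"
    by simp
  then show ?case
    using dvd_add[OF dvd_add[OF prime_dvd_power_add_sub[OF assms, of i "- 1"] step2.IH] minus_one]
    by (simp only:)
qed

lemma prime_dvd_int_poly_power_sub_pcompose:
  fixes g :: "int poly"
  assumes "prime p"
  shows "of_nat p dvd g ^ p - g \<circ>\<^sub>p monom 1 p"
proof (induction g)
  case 0
  have "p \<noteq> 0"
    using assms by auto
  then show ?case
    by (simp add: power_0_left)
next
  case (pCons a g)
  define x :: "int poly" where "x = monom 1 1"
  have "pCons a g = [:a:] + x * g"
    by (simp add: x_def monom_Suc)
  moreover have "pCons a g \<circ>\<^sub>p monom 1 p = [:a:] + x ^ p * g \<circ>\<^sub>p monom 1 p"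
    by (simp add: x_def pcompose_pCons monom_power)
  ultimately have "pCons a g ^ p - pCons a g \<circ>\<^sub>p monom 1 p
      = (([:a:] + x * g) ^ p - [:a:] ^ p - (x * g) ^ p) + [:a ^ p - a:]
        + x ^ p * (g ^ p - g \<circ>\<^sub>p monom 1 p)"
    by (simp add: algebra_simps poly_const_pow)
  moreover have "of_nat p dvd [:a ^ p - a:]"
    using prime_dvd_int_power_sub[OF assms, of a] by (simp add: of_nat_poly)
  ultimately show ?case
    using dvd_add[OF dvd_add[OF prime_dvd_power_add_sub[OF assms]] dvd_mult[OF pCons.IH]] by (simp only:)
qed

lemma ipoly_power_prime:
  assumes "prime p"
  obtains H where "\<And>z :: 'a::comm_ring_1. ipoly g z ^ p = ipoly g (z ^ p) + of_nat p * ipoly H z"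
proof -
  obtain H where "g ^ p - g \<circ>\<^sub>p monom 1 p = of_nat p * H"
    using prime_dvd_int_poly_power_sub_pcompose[OF assms, of g] by (elim dvdE)
  then have "g ^ p = g \<circ>\<^sub>p monom 1 p + of_nat p * H"
    by (simp add: algebra_simps)
  then show ?thesis
    by (intro that[of H]) (simp flip: ipoly_power)
qed

lemma primitive_dvd_smult_imp_dvd:
  fixes f g :: "int poly"
  assumes "content f = 1" "f dvd smult c g" "c \<noteq> 0"
  shows "f dvd g"
proof -
  have "primitive_part f dvd primitive_part (smult c g)"
    using assms(2) by blast
  then have "f dvd smult (sgn c) (primitive_part g)"
    using assms(1) by (simp add: primitive_part_smult primitive_part_prim)
  then have "f dvd smult (sgn c) (smult (sgn c) (primitive_part g))"
    by (rule dvd_smult)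
  then have "f dvd primitive_part g"
    using assms(3) by simp
  then show ?thesis
    by (metis content_times_primitive_part dvd_smult)
qed

lemma primitive_min_degree_root_dvd:
  fixes \<zeta> :: "'a::idom"
  assumes "f \<noteq> 0" "content f = 1" "ipoly f \<zeta> = 0"
    and min: "\<And>g. g \<noteq> 0 \<Longrightarrow> ipoly g \<zeta> = 0 \<Longrightarrow> degree f \<le> degree g"
    and "ipoly g \<zeta> = 0"
  shows "f dvd g"
proof -
  obtain q r where qr: "pseudo_divmod g f = (q, r)"
    by (cases "pseudo_divmod g f")
  define c where "c = lead_coeff f ^ (Suc (degree g) - degree f)"
  have div: "smult c g = f * q + r"
    using pseudo_divmod(1)[OF assms(1) qr] by (simp add: c_def)
  have "ipoly r \<zeta> = 0"
    using arg_cong[OF div, of "\<lambda>h. ipoly h \<zeta>"] assms(3,5) by simp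
  then have "r = 0"
    using min pseudo_divmod(2)[OF assms(1) qr] by force
  then have "f dvd smult c g"
    using div by simp
  moreover have "c \<noteq> 0"
    using assms(1) by (simp add: c_def)
  ultimately show ?thesis
    by (rule primitive_dvd_smult_imp_dvd[OF assms(2)])
qed

lemma int_minpoly_exists:
  fixes \<zeta> :: "'a::{idom, ring_char_0}"
  assumes "g \<noteq> 0" "ipoly g \<zeta> = 0"
  obtains f where "f \<noteq> 0" "\<And>h. ipoly h \<zeta> = 0 \<longleftrightarrow> f dvd h"
proof -
  define d where "d = (LEAST d. \<exists>g. g \<noteq> 0 \<and> ipoly g \<zeta> = 0 \<and> degree g = d)"
  have "\<exists>g. g \<noteq> 0 \<and> ipoly g \<zeta> = 0 \<and> degree g = d"
    unfolding d_def by (rule LeastI_ex) (use assms in blast)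
  then obtain g0 where g0: "g0 \<noteq> 0" "ipoly g0 \<zeta> = 0" "degree g0 = d"
    by blast
  have min: "d \<le> degree g" if "g \<noteq> 0" "ipoly g \<zeta> = 0" for g
    unfolding d_def by (rule Least_le) (use that in blast)
  define f where "f = primitive_part g0"
  have "ipoly g0 \<zeta> = of_int (content g0) * ipoly f \<zeta>"
    by (metis f_def content_times_primitive_part ipoly_smult)
  then have "ipoly f \<zeta> = 0"
    using g0 by simp
  moreover have "f \<noteq> 0" "content f = 1" "degree f = d"
    using g0 by (simp_all add: f_def)
  ultimately have "ipoly h \<zeta> = 0 \<longleftrightarrow> f dvd h" for h
    using primitive_min_degree_root_dvd[of f \<zeta> h] min by auto
  with \<open>f \<noteq> 0\<close> show ?thesis
    using that by blast
qed

lemma int_poly_divmod_unit_lead_coeff: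
  fixes f g :: "int poly"
  assumes "is_unit (lead_coeff f)"
  obtains q r where "g = f * q + r" "r = 0 \<or> degree r < degree f"
proof -
  have f: "f \<noteq> 0"
    using assms by auto
  obtain q r where qr: "pseudo_divmod g f = (q, r)"
    by (cases "pseudo_divmod g f")
  define c where "c = lead_coeff f ^ (Suc (degree g) - degree f)"
  have "is_unit c"
    using assms by (simp add: c_def power_abs)
  then have "c * c = 1"
    by (metis abs_mult_self_eq mult_1_left zdvd1_eq)
  then have "g = smult c (smult c g)"
    by simp
  also have "smult c g = f * q + r"
    using pseudo_divmod(1)[OF f qr] by (simp add: c_def)
  finally have "g = f * smult c q + smult c r"
    by (simp add: smult_add_right)
  moreover have "smult c r = 0 \<or> degree (smult c r) < degree f"
    using pseudo_divmod(2)[OF f qr] by auto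
  ultimately show ?thesis
    using that by blast
qed

text \<open>For an algebraic integer \<zeta>, an integer lying in m\<int>[\<zeta>] is divisible by m.\<close>

lemma dvd_of_int_eq_mult_ipoly:
  fixes \<zeta> :: "'a::{idom, ring_char_0}"
  assumes f: "f \<noteq> 0" "\<And>h. ipoly h \<zeta> = 0 \<longleftrightarrow> f dvd h" "is_unit (lead_coeff f)"
    and eq: "of_int c = of_int m * ipoly Y \<zeta>"
  shows "m dvd c"
proof -
  obtain Q R where QR: "Y = f * Q + R" "R = 0 \<or> degree R < degree f"
    using int_poly_divmod_unit_lead_coeff[OF f(3)] by blast
  have f\<zeta>: "ipoly f \<zeta> = 0"
    using f(2) by simp
  have "degree f \<noteq> 0"
  proof
    assume "degree f = 0"
    then obtain a where "f = [:a:]"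
      by (rule degree_eq_zeroE)
    then show False
      using f(1) f\<zeta> by simp
  qed
  define T where "T = smult m R - [:c:]"
  have "ipoly T \<zeta> = 0"
    using eq f\<zeta> by (simp add: T_def QR(1))
  then have "f dvd T"
    using f(2) by blast
  moreover have "degree T < degree f"
    using QR(2) \<open>degree f \<noteq> 0\<close> degree_diff_le_max[of "smult m R" "[:c:]"]
      degree_smult_le[of m R] by (auto simp: T_def)
  ultimately have "T = 0"
    using dvd_imp_degree_le by force
  then have "coeff (smult m R) 0 = c"
    by (simp add: T_def)
  then show ?thesis
    by (metis coeff_smult dvd_triv_left)
qed

text \<open>Differentiating X^M - 1 = f h at \<zeta> gives M \<zeta>^(M-1) = h(\<zeta>) f'(\<zeta>), and
  h(\<zeta>)^p lies in p\<int>[\<zeta>] by the Frobenius congruence because h(\<zeta>^p) = 0.\<close>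

lemma root_unity_order_power_prime_multiple:
  fixes \<zeta> :: "'a::comm_ring_1"
  assumes "\<zeta> ^ M = 1" "M > 0" "prime p"
    and fh: "monom 1 M - 1 = f * h" "ipoly f \<zeta> = 0" "ipoly h (\<zeta> ^ p) = 0"
  obtains Y where "of_nat (M ^ p) = of_nat p * ipoly Y \<zeta>"
proof -
  obtain H where H: "\<And>z :: 'a. ipoly h z ^ p = ipoly h (z ^ p) + of_nat p * ipoly H z"
    using ipoly_power_prime[OF assms(3)] by blast
  have "monom (int M) (M - 1) = f * pderiv h + h * pderiv f"
    using arg_cong[OF fh(1), of pderiv] by (simp add: pderiv_diff pderiv_monom pderiv_mult)
  then have "ipoly (monom (int M) (M - 1)) \<zeta> = ipoly (f * pderiv h + h * pderiv f) \<zeta>"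
    by (rule arg_cong)
  then have deriv: "of_nat M * \<zeta> ^ (M - 1) = ipoly h \<zeta> * ipoly (pderiv f) \<zeta>"
    using fh(2) by simp
  have "\<zeta> ^ (M - 1) * \<zeta> = \<zeta> ^ M"
    using assms(2) by (cases M) (simp_all add: mult.commute)
  then have "\<zeta> ^ (M - 1) * \<zeta> = 1"
    using assms(1) by simp
  then have "of_nat M = of_nat M * \<zeta> ^ (M - 1) * \<zeta>"
    by (simp add: mult.assoc)
  also have "\<dots> = ipoly h \<zeta> * (ipoly (pderiv f) \<zeta> * \<zeta>)"
    by (simp only: deriv mult.assoc)
  finally have "of_nat (M ^ p) = ipoly h \<zeta> ^ p * (ipoly (pderiv f) \<zeta> * \<zeta>) ^ p"
    by (simp add: power_mult_distrib)
  also have "\<dots> = of_nat p * ipoly (H * (pderiv f * monom 1 1) ^ p) \<zeta>"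
    using H[of \<zeta>] fh(3) by simp
  finally show ?thesis
    by (rule that)
qed

lemma root_unity_int_minpoly_exists:
  fixes \<zeta> :: "'a::{idom, ring_char_0}"
  assumes "\<zeta> ^ M = 1" "M > 0"
  obtains f h where "f \<noteq> 0" "\<And>g. ipoly g \<zeta> = 0 \<longleftrightarrow> f dvd g" "is_unit (lead_coeff f)"
    "monom 1 M - 1 = f * h"
proof -
  define X :: "int poly" where "X = monom 1 M - 1"
  have lead_X: "lead_coeff X = 1"
    using assms(2) lead_coeff_add_le[of "- 1" "monom 1 M"] by (simp add: X_def degree_monom_eq)
  have "ipoly X \<zeta> = 0"
    using assms(1) by (simp add: X_def)
  moreover have "X \<noteq> 0"
    using lead_X by auto
  ultimately obtain f where f: "f \<noteq> 0" "\<And>g. ipoly g \<zeta> = 0 \<longleftrightarrow> f dvd g"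
    using int_minpoly_exists by blast
  then have "f dvd X"
    using \<open>ipoly X \<zeta> = 0\<close> by blast
  then obtain h where h: "X = f * h"
    by (elim dvdE)
  have "lead_coeff f * lead_coeff h = 1"
    using lead_X by (simp add: h lead_coeff_mult)
  then have "is_unit (lead_coeff f)"
    by (rule dvdI[OF sym])
  then show ?thesis
    using that f h unfolding X_def by blast
qed

lemma ipoly_root_unity_power_prime:
  fixes \<zeta> :: "'a::{idom, ring_char_0}"
  assumes "\<zeta> ^ M = 1" "M > 0" "prime p" "\<not> p dvd M" "ipoly g \<zeta> = 0"
  shows "ipoly g (\<zeta> ^ p) = 0"
proof -
  obtain f h where f: "f \<noteq> 0" "\<And>g. ipoly g \<zeta> = 0 \<longleftrightarrow> f dvd g" "is_unit (lead_coeff f)"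
    and h: "monom 1 M - 1 = f * h"
    using root_unity_int_minpoly_exists[OF assms(1,2)] by blast
  have "ipoly f (\<zeta> ^ p) = 0"
  proof (rule ccontr)
    assume f_conj: "ipoly f (\<zeta> ^ p) \<noteq> 0"
    have "(\<zeta> ^ p) ^ M = (\<zeta> ^ M) ^ p"
      by (simp only: mult.commute flip: power_mult)
    then have "ipoly (monom 1 M - 1) (\<zeta> ^ p) = 0"
      using assms(1) by simp
    then have "ipoly h (\<zeta> ^ p) = 0"
      using f_conj by (simp add: h)
    moreover have "ipoly f \<zeta> = 0"
      using f(2) by simp
    ultimately obtain Y where "of_nat (M ^ p) = of_nat p * ipoly Y \<zeta>"
      using root_unity_order_power_prime_multiple[OF assms(1-3) h] by metis
    then have "int p dvd int M ^ p"
      using dvd_of_int_eq_mult_ipoly[OF f, of "int M ^ p" "int p" Y] by simp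
    then show False
      using assms(3,4) prime_dvd_power_nat by (simp flip: of_nat_power)
  qed
  then show ?thesis
    using f(2) assms(5) by auto
qed

lemma ipoly_root_unity_power_coprime:
  fixes \<zeta> :: "'a::{idom, ring_char_0}"
  assumes "\<zeta> ^ M = 1" "M > 0" "coprime k M" "ipoly g \<zeta> = 0"
  shows "ipoly g (\<zeta> ^ k) = 0"
  using assms(3)
proof (induction k rule: prime_divisors_induct)
  case zero
  then have "\<zeta> = 1"
    using assms(1) by simp
  then show ?case
    using assms(4) by simp
next
  case (unit k)
  then show ?case
    using assms(4) by simp
next
  case (factor p k)
  then have "ipoly g (\<zeta> ^ k) = 0" "\<not> p dvd M"
    using prime_imp_coprime by auto
  moreover have "(\<zeta> ^ k) ^ M = 1"
    using assms(1) by (metis mult.commute power_mult power_one)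
  ultimately have "ipoly g ((\<zeta> ^ k) ^ p) = 0"
    using ipoly_root_unity_power_prime assms(2) factor.hyps by blast
  then show ?case
    by (simp add: mult.commute power_mult)
qed

lemma Rats_common_denominator:
  fixes a :: "'i \<Rightarrow> 'a::field_char_0"
  assumes "finite I" "\<forall>i\<in>I. a i \<in> \<rat>"
  obtains d :: int where "d > 0" "\<forall>i\<in>I. of_int d * a i \<in> \<int>"
  using assms
proof (induction I arbitrary: thesis rule: finite_induct)
  case empty
  then show ?case
    by (metis empty_iff zero_less_one)
next
  case (insert j I)
  then obtain d where d: "d > 0" "\<forall>i\<in>I. of_int d * a i \<in> \<int>"
    by auto
  obtain n e where ne: "e > 0" "a j = of_int n / of_int e"
    using insert.prems(2) by (auto elim!: Rats_cases')
  have "of_int (d * e) * a i \<in> \<int>" if "i \<in> insert j I" for i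
  proof (cases "i = j")
    case True
    then have "of_int (d * e) * a i = of_int (d * n)"
      using ne by (simp add: field_simps)
    then show ?thesis
      by (simp only: Ints_of_int)
  next
    case False
    then have "of_int e * (of_int d * a i) \<in> \<int>"
      using d that by simp
    then show ?thesis
      by (simp add: mult_ac)
  qed
  then show ?case
    using d(1) ne(1) by (intro insert.prems(1)[of "d * e"]) auto
qed

lemma rat_sum_root_unity_power_coprime:
  fixes \<zeta> :: "'a::field_char_0"
  assumes "finite I" "\<forall>i\<in>I. a i \<in> \<rat>" "\<zeta> ^ M = 1" "M > 0" "coprime k M"
    and "(\<Sum>i\<in>I. a i * \<zeta> ^ e i) = 0"
  shows "(\<Sum>i\<in>I. a i * \<zeta> ^ (k * e i)) = 0"
proof -
  obtain d :: int where d: "d > 0" "\<forall>i\<in>I. of_int d * a i \<in> \<int>"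
    using Rats_common_denominator[OF assms(1,2)] by blast
  then have "\<forall>i\<in>I. \<exists>n. of_int d * a i = of_int n"
    by (auto elim!: Ints_cases)
  then obtain b where b: "\<forall>i\<in>I. of_int d * a i = of_int (b i)"
    by (auto dest!: bchoice)
  define g where "g = (\<Sum>i\<in>I. monom (b i) (e i))"
  have g_eval: "ipoly g z = of_int d * (\<Sum>i\<in>I. a i * z ^ e i)" for z :: 'a
  proof -
    have "ipoly g z = (\<Sum>i\<in>I. of_int (b i) * z ^ e i)"
      by (simp add: g_def ipoly_sum)
    also have "\<dots> = (\<Sum>i\<in>I. of_int d * (a i * z ^ e i))"
      using b by (intro sum.cong refl) (metis mult.assoc)
    finally show ?thesis
      by (simp add: sum_distrib_left)
  qed
  then have "ipoly g (\<zeta> ^ k) = 0"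
    using ipoly_root_unity_power_coprime[OF assms(3-5), of g] assms(6) by simp
  then show ?thesis
    using d(1) by (simp add: g_eval flip: power_mult)
qed

section \<open>Minimal vanishing sums of roots of unity\<close>

definition prim_root_unity :: "nat \<Rightarrow> complex" where
  "prim_root_unity n = exp (2 * of_real pi * \<i> / of_nat n)"

lemma prim_root_unity_power:
  "prim_root_unity n ^ k = exp (2 * of_real pi * \<i> * of_nat k / of_nat n)"
  by (simp add: prim_root_unity_def mult_ac flip: exp_of_nat_mult)

lemma prim_root_unity_power_eq_1_iff:
  "n > 0 \<Longrightarrow> prim_root_unity n ^ k = 1 \<longleftrightarrow> n dvd k"
  unfolding prim_root_unity_power by (rule complex_root_unity_eq_1) simp

lemma root_unity_eq_prim_root_unity_power:
  assumes "n > 0" "z ^ n = 1"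
  obtains k where "z = prim_root_unity n ^ k"
proof -
  have "z \<in> {z. z ^ n = 1}"
    using assms(2) by simp
  then obtain k where "z = exp (2 * of_real pi * \<i> * of_nat k / of_nat n)"
    using assms(1) by (auto simp: complex_roots_unity)
  then show ?thesis
    using that[of k] by (simp add: prim_root_unity_power)
qed

lemma prim_root_unity_mult_power:
  assumes "q > 0"
  shows "prim_root_unity (p * q) ^ q = prim_root_unity p"
proof -
  have "prim_root_unity (p * q) ^ q = exp (2 * of_real pi * \<i> * of_nat q / (of_nat p * of_nat q))"
    by (simp add: prim_root_unity_power)
  also have "\<dots> = prim_root_unity p"
    using assms by (simp add: prim_root_unity_def)
  finally show ?thesis .
qed

lemma sum_prim_root_unity_power_powers:
  assumes "p > 0"
  shows "(\<Sum>t<p. (prim_root_unity p ^ j) ^ t) = (if p dvd j then of_nat p else 0)"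
proof (cases "p dvd j")
  case True
  then have "prim_root_unity p ^ j = 1"
    using assms by (simp add: prim_root_unity_power_eq_1_iff)
  then show ?thesis
    using True by simp
next
  case False
  have "(prim_root_unity p ^ j) ^ p = (prim_root_unity p ^ p) ^ j"
    by (simp only: mult.commute flip: power_mult)
  moreover have "prim_root_unity p ^ p = 1"
    using assms by (simp add: prim_root_unity_power_eq_1_iff)
  ultimately have "(prim_root_unity p ^ j) ^ p = 1"
    by simp
  then show ?thesis
    using False assms by (simp add: geometric_sum prim_root_unity_power_eq_1_iff)
qed

lemma dvd_diff_add_less_iff:
  fixes p :: nat
  assumes "g < p" "h < p"
  shows "p dvd p - h + g \<longleftrightarrow> g = h"
proof (cases "h \<le> g")
  case True
  then have "p - h + g = p + (g - h)"
    using assms by simp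
  then have "p dvd p - h + g \<longleftrightarrow> p dvd g - h"
    by (metis dvd_add_right_iff dvd_refl)
  then show ?thesis
    using assms True nat_dvd_not_less[of "g - h" p] by (cases "g = h") auto
next
  case False
  then show ?thesis
    using assms nat_dvd_not_less[of "p - h + g" p] by auto
qed

lemma dft_inversion:
  fixes T :: "nat \<Rightarrow> complex" and p :: nat
  defines "\<omega> \<equiv> prim_root_unity p"
  assumes "p > 0" "h < p"
  shows "of_nat p * T h = (\<Sum>t<p. \<omega> ^ (t * (p - h)) * (\<Sum>g<p. \<omega> ^ (t * g) * T g))"
proof -
  have "(\<Sum>t<p. \<omega> ^ (t * (p - h)) * (\<Sum>g<p. \<omega> ^ (t * g) * T g))
      = (\<Sum>t<p. \<Sum>g<p. T g * (\<omega> ^ (p - h + g)) ^ t)"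
    by (simp add: sum_distrib_left mult_ac add.commute flip: power_add power_mult add_mult_distrib2)
  also have "\<dots> = (\<Sum>g<p. T g * (\<Sum>t<p. (\<omega> ^ (p - h + g)) ^ t))"
    by (subst sum.swap) (simp add: sum_distrib_left)
  also have "\<dots> = (\<Sum>g<p. if g = h then T g * of_nat p else 0)"
  proof (intro sum.cong refl)
    fix g
    assume "g \<in> {..<p}"
    then show "T g * (\<Sum>t<p. (\<omega> ^ (p - h + g)) ^ t) = (if g = h then T g * of_nat p else 0)"
      using assms(2,3) dvd_diff_add_less_iff[of g p h]
      by (simp add: \<omega>_def sum_prim_root_unity_power_powers)
  qed
  also have "\<dots> = T h * of_nat p"
    using assms(3) by simp
  finally show ?thesis
    by simp
qed

lemma dft_vanishing_but_one:
  fixes T :: "nat \<Rightarrow> complex" and p :: nat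
  defines "F \<equiv> \<lambda>t. \<Sum>g<p. prim_root_unity p ^ (t * g) * T g"
  assumes "t0 < p" "\<And>t. t < p \<Longrightarrow> t \<noteq> t0 \<Longrightarrow> F t = 0"
    and "F t0 = 0 \<or> (\<exists>g<p. T g = 0)" "h < p"
  shows "T h = 0"
proof -
  have inv: "of_nat p * T k = prim_root_unity p ^ (t0 * (p - k)) * F t0" if "k < p" for k
  proof -
    have "of_nat p * T k = (\<Sum>t<p. prim_root_unity p ^ (t * (p - k)) * F t)"
      using dft_inversion[of p k T] that by (simp add: F_def)
    also have "\<dots> = prim_root_unity p ^ (t0 * (p - k)) * F t0"
      using assms(2,3) by (subst sum.remove[of _ t0]) (auto intro!: sum.neutral)
    finally show ?thesis .
  qed
  moreover have "prim_root_unity p \<noteq> 0"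
    by (simp add: prim_root_unity_def)
  ultimately have "F t0 = 0"
    using assms(4) by force
  then show ?thesis
    using inv[OF assms(5)] assms(5) by simp
qed

lemma power_eq_power_mod:
  fixes \<omega> :: "'a::monoid_mult"
  assumes "\<omega> ^ p = 1"
  shows "\<omega> ^ n = \<omega> ^ (n mod p)"
proof -
  have "\<omega> ^ n = (\<omega> ^ p) ^ (n div p) * \<omega> ^ (n mod p)"
    by (metis div_mult_mod_eq mult.commute power_add power_mult)
  then show ?thesis
    using assms by simp
qed

lemma sum_power_group_mod:
  fixes \<omega> :: "'a::comm_semiring_1"
  assumes "finite I" "\<omega> ^ p = 1" "p > 0"
  shows "(\<Sum>i\<in>I. x i * \<omega> ^ (t * e i))
    = (\<Sum>g<p. \<omega> ^ (t * g) * (\<Sum>i | i \<in> I \<and> e i mod p = g. x i))"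
proof -
  have "(\<Sum>g<p. \<omega> ^ (t * g) * (\<Sum>i | i \<in> I \<and> e i mod p = g. x i))
      = (\<Sum>g<p. \<Sum>i | i \<in> I \<and> e i mod p = g. x i * \<omega> ^ (t * (e i mod p)))"
    by (simp add: sum_distrib_left mult.commute)
  also have "\<dots> = (\<Sum>i\<in>I. x i * \<omega> ^ (t * (e i mod p)))"
    using assms(1,3) by (intro sum.group) auto
  also have "\<dots> = (\<Sum>i\<in>I. x i * \<omega> ^ (t * e i))"
    using power_eq_power_mod[OF assms(2)] by (metis mod_mult_right_eq)
  finally show ?thesis ..
qed

lemma coprime_one_add_mult_iff:
  fixes p q t :: nat
  assumes "prime p"
  shows "coprime (1 + t * q) (p * q) \<longleftrightarrow> \<not> p dvd 1 + t * q"
  using assms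
  by (metis add.commute coprime_add_one_left coprime_common_divisor coprime_commute
      coprime_mult_right_iff dvd_triv_left prime_imp_coprime not_prime_unit)

lemma prime_dvd_one_add_mult_unique:
  fixes p q t t' :: nat
  assumes "prime p" "\<not> p dvd q" "t < p" "t' < p" "p dvd 1 + t * q" "p dvd 1 + t' * q"
  shows "t = t'"
proof -
  have "s = s'" if "s \<le> s'" "s' < p" "p dvd 1 + s * q" "p dvd 1 + s' * q" for s s'
  proof -
    have "p dvd (s' - s) * q"
      using that by (metis add_diff_cancel_left dvd_diff_nat left_diff_distrib')
    then have "p dvd s' - s"
      using assms(1,2) prime_dvd_mult_iff by blast
    then show ?thesis
      using that nat_dvd_not_less[of "s' - s" p] by (cases "s = s'") auto
  qed
  then show ?thesis
    using assms(3-6) by (metis le_cases)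
qed

lemma coprime_one_add_mult_but_one:
  fixes p q :: nat
  assumes "prime p"
  obtains t0 where "t0 < p" "\<And>t. t < p \<Longrightarrow> t \<noteq> t0 \<Longrightarrow> coprime (1 + t * q) (p * q)"
proof (cases "\<exists>t0<p. p dvd 1 + t0 * q")
  case True
  then obtain t0 where t0: "t0 < p" "p dvd 1 + t0 * q"
    by blast
  have "\<not> p dvd q"
  proof
    assume "p dvd q"
    then have "p dvd 1"
      using t0(2) by (metis add.commute dvd_add_right_iff dvd_mult)
    then show False
      using assms by simp
  qed
  show ?thesis
  proof (rule that[OF t0(1)])
    fix t
    assume "t < p" "t \<noteq> t0"
    then show "coprime (1 + t * q) (p * q)"
      using prime_dvd_one_add_mult_unique[OF assms \<open>\<not> p dvd q\<close> _ t0(1) _ t0(2)]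
        coprime_one_add_mult_iff[OF assms] by blast
  qed
next
  case False
  then show ?thesis
    using that[of 0] assms prime_gt_0_nat coprime_one_add_mult_iff by blast
qed

lemma prime_factor_square_or_ge_5:
  fixes D :: nat
  assumes "D > 0" "\<not> D dvd 6"
  obtains p where "prime p" "p dvd D" "p ^ 2 dvd D \<or> 5 \<le> p"
proof (rule ccontr)
  assume no_factor: "\<not> thesis"
  define m where "m = D div gcd D 6"
  have D_eq: "D = m * gcd D 6"
    by (simp add: m_def)
  then have "m \<noteq> 1"
    using assms(2) by (metis gcd_dvd2 mult_1)
  moreover have "m \<noteq> 0"
    using assms(1) by (simp add: m_def dvd_div_eq_0_iff)
  ultimately obtain r where r: "prime r" "r dvd m"
    using prime_factor_nat by blast
  then have "r dvd D"
    using D_eq by (metis dvd_mult2)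
  then have "r < 5" "\<not> r ^ 2 dvd D"
    using no_factor r(1) that by (meson not_le)+
  have "r dvd 6"
  proof -
    have "r = 2 \<or> r = 3 \<or> r = 4"
      using \<open>r < 5\<close> prime_ge_2_nat[OF r(1)] by auto
    moreover have "\<not> prime (4::nat)"
      using prime_product[of 2 "2::nat"] by simp
    ultimately show ?thesis
      using r(1) by auto
  qed
  then have "r dvd gcd D 6"
    using \<open>r dvd D\<close> by simp
  then have "r ^ 2 dvd D"
    using r(2) unfolding m_def by (metis dvd_div_mult_self gcd_nat.cobounded1 mult_dvd_mono power2_eq_square)
  then show False
    using \<open>\<not> r ^ 2 dvd D\<close> by contradiction
qed

lemma residue_class_sum_eq_0:
  fixes x :: "'i \<Rightarrow> complex" and e :: "'i \<Rightarrow> nat"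
  assumes "finite I" "prime p" "h < p"
    and twisted: "\<And>t. coprime (1 + t * q) (p * q) \<Longrightarrow>
      (\<Sum>i\<in>I. x i * prim_root_unity p ^ (t * e i)) = 0"
    and "p dvd q \<or> card I < p"
  shows "(\<Sum>i | i \<in> I \<and> e i mod p = h. x i) = 0"
proof -
  define T where "T g = (\<Sum>i | i \<in> I \<and> e i mod p = g. x i)" for g
  have p0: "p > 0"
    using assms(2) prime_gt_0_nat by blast
  have F: "(\<Sum>g<p. prim_root_unity p ^ (t * g) * T g) = 0" if "coprime (1 + t * q) (p * q)" for t
  proof -
    have "prim_root_unity p ^ p = 1"
      using p0 by (simp add: prim_root_unity_power_eq_1_iff)
    then show ?thesis
      using twisted[OF that] sum_power_group_mod[OF assms(1) _ p0, of "prim_root_unity p" x t e]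
      by (simp add: T_def)
  qed
  obtain t0 where t0: "t0 < p" "\<And>t. t < p \<Longrightarrow> t \<noteq> t0 \<Longrightarrow> coprime (1 + t * q) (p * q)"
    using coprime_one_add_mult_but_one[OF assms(2)] by blast
  have "(\<Sum>g<p. prim_root_unity p ^ (t0 * g) * T g) = 0 \<or> (\<exists>g<p. T g = 0)"
  proof (cases "p dvd q")
    case True
    then have "\<not> p dvd 1 + t0 * q"
      using assms(2) by (metis add.commute dvd_add_right_iff dvd_mult not_prime_unit)
    then show ?thesis
      using F coprime_one_add_mult_iff[OF assms(2)] by blast
  next
    case False
    then have "card ((\<lambda>i. e i mod p) ` I) < card {..<p}"
      using assms(5) card_image_le[OF assms(1), of "\<lambda>i. e i mod p"] by auto
    then have "\<not> {..<p} \<subseteq> (\<lambda>i. e i mod p) ` I"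
      using card_mono[OF finite_imageI[OF assms(1)]] by (meson not_le)
    then obtain g where "g < p" "g \<notin> (\<lambda>i. e i mod p) ` I"
      by auto
    then have "T g = 0"
      by (auto simp: T_def intro!: sum.neutral)
    then show ?thesis
      using \<open>g < p\<close> by blast
  qed
  then show ?thesis
    using dft_vanishing_but_one[of t0 p T h] t0 F assms(3) by (simp add: T_def)
qed

definition minimal_zero_sum :: "('i \<Rightarrow> 'a::comm_monoid_add) \<Rightarrow> 'i set \<Rightarrow> bool" where
  "minimal_zero_sum x I \<longleftrightarrow>
     sum x I = 0 \<and> (\<forall>J\<subseteq>I. J \<noteq> {} \<longrightarrow> sum x J = 0 \<longrightarrow> J = I)"

lemma minimal_zero_sum_root_unity_divisor:
  fixes a u :: "'i \<Rightarrow> complex"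
  assumes "finite I" "i0 \<in> I" "u i0 = 1" "\<forall>i\<in>I. a i \<in> \<rat>" "\<forall>i\<in>I. u i ^ D = 1" "D > 0"
    and min: "minimal_zero_sum (\<lambda>i. a i * u i) I"
    and p: "prime p" "p dvd D" "p ^ 2 dvd D \<or> card I < p"
  shows "\<forall>i\<in>I. u i ^ (D div p) = 1"
proof -
  define q where "q = D div p"
  have D: "D = p * q" "q > 0"
    using assms(6) p(2) by (auto simp: q_def)
  define \<xi> where "\<xi> = prim_root_unity D"
  have "\<forall>i\<in>I. \<exists>k. u i = \<xi> ^ k"
    using root_unity_eq_prim_root_unity_power assms(5,6) unfolding \<xi>_def by metis
  then obtain e where e: "\<forall>i\<in>I. u i = \<xi> ^ e i"
    by (auto dest!: bchoice)
  have \<xi>D: "\<xi> ^ D = 1"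
    using assms(6) by (simp add: \<xi>_def prim_root_unity_power_eq_1_iff)
  have "(\<Sum>i\<in>I. a i * \<xi> ^ e i) = 0"
    using min e by (simp add: minimal_zero_sum_def)
  txt \<open>The conjugation \<xi> \<mapsto> \<xi>^(1+tq) multiplies \<xi>^e by \<omega>^(te), where \<omega> = \<xi>^q has order p.\<close>
  then have "(\<Sum>i\<in>I. a i * u i * prim_root_unity p ^ (t * e i)) = 0"
    if "coprime (1 + t * q) (p * q)" for t
    using rat_sum_root_unity_power_coprime[OF assms(1,4) \<xi>D assms(6), of "1 + t * q" e] that e D
    by (simp add: \<xi>_def algebra_simps power_add power_mult prim_root_unity_mult_power)
  moreover have "p dvd q \<or> card I < p"
    using p(3) D prime_gt_0_nat[OF p(1)] by (auto simp: power2_eq_square)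
  ultimately have "(\<Sum>i | i \<in> I \<and> e i mod p = 0. a i * u i) = 0"
    using residue_class_sum_eq_0[OF assms(1) p(1), of 0 q "\<lambda>i. a i * u i" e] prime_gt_0_nat[OF p(1)]
    by (simp add: mult.assoc)
  moreover have "p dvd e i0"
    using e assms(2,3,6) \<xi>D p(2) by (metis \<xi>_def dvd_trans prim_root_unity_power_eq_1_iff)
  ultimately have "{i \<in> I. e i mod p = 0} = I"
    using min assms(2) unfolding minimal_zero_sum_def
    by (metis (mono_tags) dvd_eq_mod_eq_0 empty_iff mem_Collect_eq subsetI)
  show ?thesis
  proof
    fix i
    assume "i \<in> I"
    then obtain k where "e i = p * k"
      using \<open>{i \<in> I. e i mod p = 0} = I\<close> by blast
    then have "u i ^ (D div p) = (\<xi> ^ D) ^ k"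
      using e \<open>i \<in> I\<close> D(1) by (simp add: q_def mult_ac flip: power_mult)
    then show "u i ^ (D div p) = 1"
      using \<xi>D by simp
  qed
qed

lemma minimal_zero_sum_root_unity_6:
  fixes a u :: "'i \<Rightarrow> complex"
  assumes "finite I" "card I \<le> 4" "i0 \<in> I" "u i0 = 1" "\<forall>i\<in>I. a i \<in> \<rat>"
    and "\<forall>i\<in>I. u i ^ D = 1" "D > 0" "minimal_zero_sum (\<lambda>i. a i * u i) I"
  shows "\<forall>i\<in>I. u i ^ 6 = 1"
  using assms(6,7)
proof (induction D rule: less_induct)
  case (less D)
  show ?case
  proof (cases "D dvd 6")
    case True
    then show ?thesis
      using less.prems(1) by (metis dvdE power_mult power_one)
  next
    case False
    then obtain p where p: "prime p" "p dvd D" "p ^ 2 dvd D \<or> 5 \<le> p"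
      using prime_factor_square_or_ge_5[OF less.prems(2)] by blast
    then have "\<forall>i\<in>I. u i ^ (D div p) = 1"
      using minimal_zero_sum_root_unity_divisor[OF assms(1,3,4,5) less.prems assms(8)] assms(2)
      by force
    moreover have "D div p < D" "D div p > 0"
      using p less.prems(2) prime_gt_1_nat[OF p(1)] by (auto simp: dvd_div_eq_0_iff)
    ultimately show ?thesis
      using less.IH by blast
  qed
qed

section \<open>Rational distances and rational angles\<close>

text \<open>The differences q - p of the pairs being counted, see rational_polar_iff.\<close>

definition rational_polar :: "complex \<Rightarrow> bool" where
  "rational_polar z \<longleftrightarrow>
     (\<exists>r \<gamma>. r \<in> \<rat> \<and> r > 0 \<and> \<gamma> \<in> \<rat> \<and> z = of_real r * exp (of_real (pi * \<gamma>) * \<i>))"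

lemma exp_pi_rat_root_unity:
  assumes "\<gamma> \<in> \<rat>"
  obtains N where "N > 0" "exp (of_real (pi * \<gamma>) * \<i>) ^ N = 1"
proof -
  obtain m n where mn: "n > 0" "\<gamma> = of_int m / of_int n"
    using assms by (elim Rats_cases')
  define N where "N = nat (2 * n)"
  have real_eq: "real N * (pi * \<gamma>) = 2 * real_of_int m * pi"
    using mn by (simp add: N_def field_simps)
  have "exp (of_real (pi * \<gamma>) * \<i>) ^ N = exp (of_nat N * (of_real (pi * \<gamma>) * \<i>))"
    by (simp only: exp_of_nat_mult)
  also have "of_nat N * (of_real (pi * \<gamma>) * \<i>) = of_real (real N * (pi * \<gamma>)) * \<i>"
    by simp
  also have "\<dots> = 2 * of_int m * of_real pi * \<i>"
    by (simp add: real_eq)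
  also have "exp \<dots> = 1"
    using exp_integer_2pi[of "of_int m"] by simp
  finally have "exp (of_real (pi * \<gamma>) * \<i>) ^ N = 1" .
  moreover have "N > 0"
    using mn(1) by (simp add: N_def)
  ultimately show ?thesis
    using that by blast
qed

lemma rational_polar_nonzero: "rational_polar z \<Longrightarrow> z \<noteq> 0"
  by (auto simp: rational_polar_def)

lemma rational_polar_norm: "rational_polar z \<Longrightarrow> norm z \<in> \<rat>"
  by (auto simp: rational_polar_def norm_mult)

lemma rational_polar_sgn_root_unity:
  assumes "rational_polar z"
  obtains N where "N > 0" "sgn z ^ N = 1"
proof -
  obtain r \<gamma> where r: "r \<in> \<rat>" "r > 0" "\<gamma> \<in> \<rat>"
    and z: "z = of_real r * exp (of_real (pi * \<gamma>) * \<i>)"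
    using assms by (auto simp: rational_polar_def)
  have "norm z = r"
    using r(2) by (simp add: z norm_mult)
  then have "sgn z = exp (of_real (pi * \<gamma>) * \<i>)"
    using r(2) by (simp add: sgn_eq z)
  then show ?thesis
    using exp_pi_rat_root_unity[OF r(3)] that by metis
qed

lemma rational_polar_uminus: "rational_polar z \<Longrightarrow> rational_polar (- z)"
proof -
  assume "rational_polar z"
  then obtain r \<gamma> where r: "r \<in> \<rat>" "r > 0" "\<gamma> \<in> \<rat>"
    and z: "z = of_real r * exp (of_real (pi * \<gamma>) * \<i>)"
    by (auto simp: rational_polar_def)
  have "exp (of_real (pi * (\<gamma> + 1)) * \<i>) = - exp (of_real (pi * \<gamma>) * \<i>)"
    by (simp add: algebra_simps exp_add)
  then have "- z = of_real r * exp (of_real (pi * (\<gamma> + 1)) * \<i>)"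
    by (simp add: z)
  then show ?thesis
    using r unfolding rational_polar_def by (metis Rats_1 Rats_add)
qed

lemma rational_polar_iff:
  "p \<noteq> q \<and> norm (p - q) \<in> \<rat> \<and> rational_angle p q \<longleftrightarrow> rational_polar (q - p)"
proof
  assume pq: "p \<noteq> q \<and> norm (p - q) \<in> \<rat> \<and> rational_angle p q"
  then obtain r \<gamma> where r: "r > 0" "\<gamma> \<in> \<rat>"
    and qp: "q - p = of_real r * exp (of_real (pi * \<gamma>) * \<i>)"
    by (auto simp: rational_angle_def)
  have "norm (q - p) = r"
    using r(1) by (simp add: qp norm_mult)
  then have "r \<in> \<rat>"
    using pq by (simp add: norm_minus_commute)
  then show "rational_polar (q - p)"
    using r qp by (auto simp: rational_polar_def)
next
  assume "rational_polar (q - p)"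
  then show "p \<noteq> q \<and> norm (p - q) \<in> \<rat> \<and> rational_angle p q"
    using rational_polar_nonzero rational_polar_norm[of "q - p"]
    by (auto simp: rational_angle_def rational_polar_def norm_minus_commute)
qed

lemma minimal_zero_sum_four:
  fixes x :: "nat \<Rightarrow> 'a::ab_group_add"
  assumes nz: "\<And>i. i < 4 \<Longrightarrow> x i \<noteq> 0"
    and pairs: "\<And>i j. i < 4 \<Longrightarrow> j < 4 \<Longrightarrow> i \<noteq> j \<Longrightarrow> x i + x j \<noteq> 0"
    and total: "x 0 + x 1 + x 2 + x 3 = 0"
  shows "minimal_zero_sum x {0, 1, 2, 3}"
proof -
  have "x 0 + x 1 + x 2 = - x 3" "x 0 + x 1 + x 3 = - x 2" "x 0 + x 2 + x 3 = - x 1"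
      "x 1 + x 2 + x 3 = - x 0"
    using total by (simp_all add: eq_neg_iff_add_eq_0 ac_simps)
  then have triples: "x 0 + x 1 + x 2 \<noteq> 0" "x 0 + x 1 + x 3 \<noteq> 0" "x 0 + x 2 + x 3 \<noteq> 0"
      "x 1 + x 2 + x 3 \<noteq> 0"
    using nz[of 0] nz[of 1] nz[of 2] nz[of 3] by simp_all
  have "J = {0, 1, 2, 3}" if J: "J \<subseteq> {0, 1, 2, 3}" "J \<noteq> {}" "sum x J = 0" for J
  proof -
    have "sum x J = (\<Sum>i\<in>{0, 1, 2, 3}. if i \<in> J then x i else 0)"
      using J(1) by (simp add: sum.inter_restrict[symmetric] Int_absorb1)
    also have "\<dots> = (if 0 \<in> J then x 0 else 0) + ((if 1 \<in> J then x 1 else 0)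
        + ((if 2 \<in> J then x 2 else 0) + (if 3 \<in> J then x 3 else 0)))"
      by simp
    finally have "(if 0 \<in> J then x 0 else 0) + ((if 1 \<in> J then x 1 else 0)
        + ((if 2 \<in> J then x 2 else 0) + (if 3 \<in> J then x 3 else 0))) = 0"
      using J(3) by simp
    moreover have "0 \<in> J \<or> 1 \<in> J \<or> 2 \<in> J \<or> 3 \<in> J"
      using J(1,2) by auto
    ultimately have "0 \<in> J \<and> 1 \<in> J \<and> 2 \<in> J \<and> 3 \<in> J"
      using nz[of 0] nz[of 1] nz[of 2] nz[of 3] pairs[of 0 1] pairs[of 0 2] pairs[of 0 3]
        pairs[of 1 2] pairs[of 1 3] pairs[of 2 3] triples
      by (cases "0 \<in> J"; cases "1 \<in> J"; cases "2 \<in> J"; cases "3 \<in> J") (simp_all add: add.assoc)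
    then show ?thesis
      using J(1) by auto
  qed
  moreover have "sum x {0, 1, 2, 3} = 0"
    using total by (simp add: add.assoc)
  ultimately show ?thesis
    by (simp add: minimal_zero_sum_def)
qed

lemma complex_norm_mult_sgn: "complex_of_real (norm z) * sgn z = z"
  by (cases "z = 0") (simp_all add: sgn_eq)

lemma rational_polar_minimal_zero_sum_sgn:
  fixes x :: "'i \<Rightarrow> complex"
  assumes "finite I" "card I \<le> 4" "i0 \<in> I" "\<forall>i\<in>I. rational_polar (x i)"
    and "minimal_zero_sum x I"
  shows "\<forall>i\<in>I. (sgn (x i) / sgn (x i0)) ^ 6 = 1"
proof -
  have "\<forall>i\<in>I. \<exists>N>0. sgn (x i) ^ N = 1"
    using assms(4) rational_polar_sgn_root_unity by metis
  then obtain N where N: "\<forall>i\<in>I. N i > 0 \<and> sgn (x i) ^ N i = 1"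
    by (auto dest!: bchoice)
  define D where "D = (\<Prod>i\<in>I. N i)"
  have "D > 0"
    using N by (simp add: D_def prod_pos)
  have sgn_D: "sgn (x i) ^ D = 1" if i: "i \<in> I" for i
  proof -
    obtain k where "D = N i * k"
      using dvd_prodI[OF assms(1) i, of N] by (auto simp: D_def)
    then show ?thesis
      using N i by (simp add: power_mult)
  qed
  have x0: "x i0 \<noteq> 0"
    using assms(3,4) rational_polar_nonzero by blast
  define a where "a i = complex_of_real (norm (x i) / norm (x i0))" for i
  define u where "u i = sgn (x i) / sgn (x i0)" for i
  have au: "a i * u i = x i / x i0" for i
    using complex_norm_mult_sgn[of "x i"] complex_norm_mult_sgn[of "x i0"]
    by (simp add: a_def u_def field_simps)
  have "\<forall>i\<in>I. u i ^ 6 = 1"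
  proof (rule minimal_zero_sum_root_unity_6[OF assms(1-3)])
    show "u i0 = 1"
      using x0 by (simp add: u_def sgn_zero_iff)
    show "\<forall>i\<in>I. a i \<in> \<rat>"
      unfolding a_def Rats_complex_of_real_iff using assms(3,4) rational_polar_norm by simp
    show "\<forall>i\<in>I. u i ^ D = 1"
      using sgn_D assms(3) by (simp add: u_def power_divide)
    show "minimal_zero_sum (\<lambda>i. a i * u i) I"
      using assms(5) x0 by (simp add: au minimal_zero_sum_def flip: sum_divide_distrib)
  qed (rule \<open>D > 0\<close>)
  then show ?thesis
    by (simp add: u_def)
qed

lemma rational_polar_two_paths_sgn:
  assumes "rational_polar v0" "rational_polar w0" "rational_polar v" "rational_polar w"
    and "v0 + w0 = v + w" "v0 + w0 \<noteq> 0" "v \<noteq> v0" "v \<noteq> w0"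
  shows "(sgn v / sgn v0) ^ 6 = 1" "(sgn w / sgn v0) ^ 6 = 1"
proof -
  define x where "x i = (if i = 0 then v0 else if i = 1 then w0 else if i = 2 then - v else - w)"
    for i :: nat
  have four: "i < 4 \<Longrightarrow> i = 0 \<or> i = 1 \<or> i = 2 \<or> i = 3" for i :: nat
    by auto
  have "rational_polar (x i)" for i
    using assms(1-4) rational_polar_uminus by (simp add: x_def)
  moreover have "minimal_zero_sum x {0, 1, 2, 3}"
  proof (rule minimal_zero_sum_four)
    show "x i \<noteq> 0" if "i < 4" for i
      using \<open>rational_polar (x i)\<close> by (rule rational_polar_nonzero)
    show "x i + x j \<noteq> 0" if "i < 4" "j < 4" "i \<noteq> j" for i j
      using four[OF that(1)] four[OF that(2)] that(3) assms(5-8)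
      by (auto simp: x_def algebra_simps)
    show "x 0 + x 1 + x 2 + x 3 = 0"
      using assms(5) by (simp add: x_def)
  qed
  ultimately have "\<forall>i\<in>{0, 1, 2, 3}. (sgn (x i) / sgn (x 0)) ^ 6 = 1"
    by (intro rational_polar_minimal_zero_sum_sgn) auto
  then have "(sgn (- v) / sgn v0) ^ 6 = 1" "(sgn (- w) / sgn v0) ^ 6 = 1"
    by (auto simp: x_def)
  then show "(sgn v / sgn v0) ^ 6 = 1" "(sgn w / sgn v0) ^ 6 = 1"
    by (simp_all add: sgn_minus)
qed

lemma eq_of_sgn_eq_add_eq:
  fixes v w v' w' :: complex
  assumes "sgn v = sgn v'" "sgn w = sgn w'" "v + w = v' + w'" "\<And>t. w \<noteq> of_real t * v"
  shows "v = v'"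
proof (rule ccontr)
  assume "v \<noteq> v'"
  define a where "a = norm v - norm v'"
  define b where "b = norm w' - norm w"
  have "v - v' = of_real a * sgn v"
    using complex_norm_mult_sgn[of v] complex_norm_mult_sgn[of v'] assms(1)
    by (simp add: a_def algebra_simps)
  moreover have "w' - w = of_real b * sgn w"
    using complex_norm_mult_sgn[of w] complex_norm_mult_sgn[of w'] assms(2)
    by (simp add: b_def algebra_simps)
  moreover have "v - v' = w' - w"
    using assms(3) by (simp add: algebra_simps)
  ultimately have ab: "of_real a * sgn v = of_real b * sgn w" "a \<noteq> 0" "b \<noteq> 0"
    using \<open>v \<noteq> v'\<close> by auto
  have "v \<noteq> 0"
    using assms(1) \<open>v \<noteq> v'\<close> by (auto simp: sgn_zero_iff)
  have "w = of_real (norm w * a / (norm v * b)) * v"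
  proof -
    have "of_real (norm w * a / (norm v * b)) * v
        = of_real (norm w * a / (norm v * b)) * (of_real (norm v) * sgn v)"
      by (simp only: complex_norm_mult_sgn)
    also have "\<dots> = of_real (norm w / b) * (of_real a * sgn v)"
      using \<open>v \<noteq> 0\<close> by (simp add: field_simps)
    also have "\<dots> = w"
      using ab complex_norm_mult_sgn[of w] by (simp add: field_simps)
    finally show ?thesis ..
  qed
  then show False
    using assms(4) by blast
qed

definition line_through :: "complex \<Rightarrow> complex \<Rightarrow> complex set" where
  "line_through a b = {a + of_real t * (b - a) | t. True}"

lemma is_line_line_through: "a \<noteq> b \<Longrightarrow> is_line (line_through a b)"
  unfolding is_line_def line_through_def by (intro exI[of _ a] exI[of _ "b - a"]) auto

lemma apex_eq_of_sgn_eq: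
  assumes "q2 \<notin> line_through s q1" "sgn (s - q1) = sgn (s' - q1)" "sgn (q2 - s) = sgn (q2 - s')"
  shows "s = s'"
proof -
  have "q2 - s \<noteq> of_real t * (s - q1)" for t
  proof
    assume "q2 - s = of_real t * (s - q1)"
    then have "q2 = s + of_real (- t) * (q1 - s)"
      by (simp add: algebra_simps)
    then show False
      using assms(1) unfolding line_through_def by blast
  qed
  then have "s - q1 = s' - q1"
    using assms(2,3) eq_of_sgn_eq_add_eq[of "s - q1" "s' - q1" "q2 - s" "q2 - s'"] by simp
  then show ?thesis
    by simp
qed

lemma rational_polar_apexes_card_le:
  fixes q1 q2 :: complex
  defines "A \<equiv> {s. rational_polar (s - q1) \<and> rational_polar (q2 - s) \<and> q2 \<notin> line_through s q1}"
  shows "finite A \<and> card A \<le> 38"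
proof (cases "A = {}")
  case False
  then obtain s0 where s0: "s0 \<in> A"
    by blast
  define v0 where "v0 = s0 - q1"
  define w0 where "w0 = q2 - s0"
  have "q1 \<in> line_through s0 q1"
    unfolding line_through_def by (rule CollectI, rule exI[of _ 1]) simp
  then have "q1 \<noteq> q2"
    using s0 by (auto simp: A_def)
  define M where "M = A - {s0, q1 + w0}"
  define \<phi> where "\<phi> s = (sgn (s - q1) / sgn v0, sgn (q2 - s) / sgn v0)" for s
  have "\<phi> ` M \<subseteq> {z. z ^ 6 = 1} \<times> {z. z ^ 6 = 1}"
  proof (rule image_subsetI)
    fix s
    assume "s \<in> M"
    then have "s \<in> A" "s - q1 \<noteq> v0" "s - q1 \<noteq> w0"
      by (auto simp: M_def v0_def diff_eq_eq add.commute)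
    then show "\<phi> s \<in> {z. z ^ 6 = 1} \<times> {z. z ^ 6 = 1}"
      unfolding \<phi>_def
      using s0 \<open>q1 \<noteq> q2\<close> rational_polar_two_paths_sgn[of v0 w0 "s - q1" "q2 - s"]
      by (auto simp: A_def v0_def w0_def)
  qed
  moreover have "inj_on \<phi> M"
  proof (rule inj_onI)
    fix s s'
    assume s: "s \<in> M" "s' \<in> M" "\<phi> s = \<phi> s'"
    have "sgn v0 \<noteq> 0"
      using s0 rational_polar_nonzero[of v0] by (simp add: A_def v0_def sgn_zero_iff)
    then have "sgn (s - q1) = sgn (s' - q1)" "sgn (q2 - s) = sgn (q2 - s')"
      using s(3) by (simp_all add: \<phi>_def)
    then show "s = s'"
      using s(1) apex_eq_of_sgn_eq[of q2 s q1 s'] by (simp add: M_def A_def)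
  qed
  moreover have "finite {z :: complex. z ^ 6 = 1}" "card {z :: complex. z ^ 6 = 1} = 6"
    by (simp_all add: finite_roots_unity card_roots_unity_eq)
  ultimately have "finite M" "card M \<le> 36"
    using card_image[of \<phi> M] card_mono[of "{z. z ^ 6 = 1} \<times> {z. z ^ 6 = 1}" "\<phi> ` M"]
      finite_imageD[of \<phi> M] finite_subset[of "\<phi> ` M"] by (simp_all add: card_cartesian_product)
  moreover have "A \<subseteq> M \<union> {s0, q1 + w0}"
    by (auto simp: M_def)
  moreover have "card {s0, q1 + w0} \<le> 2"
    by (simp add: card_insert_if)
  ultimately show ?thesis
    using card_mono[of "M \<union> {s0, q1 + w0}" A] card_Un_le[of M "{s0, q1 + w0}"]
    by (simp add: finite_subset)
qed simp

section \<open>Counting\<close>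

lemma card_doubleton_pairs:
  assumes "finite S" and sym: "\<And>p q. R p q \<Longrightarrow> R q p" and irrefl: "\<And>p. \<not> R p p"
  shows "2 * card {{p, q} | p q. p \<in> S \<and> q \<in> S \<and> R p q}
    = card {(p, q). p \<in> S \<and> q \<in> S \<and> R p q}"
proof -
  define A where "A = {(p, q). p \<in> S \<and> q \<in> S \<and> R p q}"
  define f where "f = (\<lambda>(p :: 'a, q). {p, q})"
  have "A \<subseteq> S \<times> S"
    by (auto simp: A_def)
  then have "finite A"
    using assms(1) by (simp add: finite_subset)
  have image: "{{p, q} | p q. p \<in> S \<and> q \<in> S \<and> R p q} = f ` A"
    by (auto simp: A_def f_def)
  have fibre: "{x \<in> A. f x = {p, q}} = {(p, q), (q, p)}" if "(p, q) \<in> A" for p q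
    using that sym by (auto simp: A_def f_def doubleton_eq_iff)
  have "card A = (\<Sum>y\<in>f ` A. card {x \<in> A. f x = y})"
    using card_eq_sum sum.image_gen[OF \<open>finite A\<close>, of "\<lambda>_. 1 :: nat" f] by simp
  also have "\<dots> = (\<Sum>y\<in>f ` A. 2)"
  proof (rule sum.cong[OF refl])
    fix y
    assume "y \<in> f ` A"
    then obtain p q where "(p, q) \<in> A" "y = {p, q}"
      by (auto simp: f_def)
    moreover have "p \<noteq> q"
      using \<open>(p, q) \<in> A\<close> irrefl by (auto simp: A_def)
    ultimately show "card {x \<in> A. f x = y} = 2"
      using fibre by simp
  qed
  finally show ?thesis
    by (simp add: image A_def)
qed

lemma degree_mult_excess_le_cherries:
  fixes E :: "'a \<Rightarrow> 'a \<Rightarrow> bool" and L :: "'a \<Rightarrow> 'a \<Rightarrow> 'a set"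
    and S :: "'a set" and s :: 'a
  defines "d \<equiv> real (card {q \<in> S. E s q})"
  assumes "finite S" and lines: "\<And>q. E s q \<Longrightarrow> real (card (S \<inter> L s q)) \<le> m"
  shows "d * (d - m) \<le> (\<Sum>q1\<in>S. \<Sum>q2\<in>S. of_bool (E s q1 \<and> E s q2 \<and> q2 \<notin> L s q1))"
proof -
  have d_sum: "d = (\<Sum>q\<in>S. of_bool (E s q))"
    using assms(2) by (simp add: d_def Int_def)
  have "of_bool (E s q1) * (d - m) \<le> (\<Sum>q2\<in>S. of_bool (E s q1 \<and> E s q2 \<and> q2 \<notin> L s q1))"
    for q1
  proof (cases "E s q1")
    case True
    have "(\<Sum>q2\<in>S. of_bool (E s q2)) - (\<Sum>q2\<in>S. of_bool (q2 \<in> L s q1))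
        \<le> (\<Sum>q2\<in>S. of_bool (E s q1 \<and> E s q2 \<and> q2 \<notin> L s q1) :: real)"
      unfolding sum_subtractf[symmetric] using True by (intro sum_mono) auto
    moreover have "(\<Sum>q2\<in>S. of_bool (q2 \<in> L s q1)) = real (card (S \<inter> L s q1))"
      using assms(2) by (simp add: Int_def)
    ultimately show ?thesis
      using lines[OF True] True d_sum by simp
  qed simp
  then have "(\<Sum>q1\<in>S. of_bool (E s q1) * (d - m))
      \<le> (\<Sum>q1\<in>S. \<Sum>q2\<in>S. of_bool (E s q1 \<and> E s q2 \<and> q2 \<notin> L s q1))"
    by (rule sum_mono)
  then show ?thesis
    by (simp add: d_sum sum_distrib_right)
qed

lemma sum_le_of_sum_mult_excess_le:
  fixes d :: "'a \<Rightarrow> real"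
  assumes "finite S" "\<forall>s\<in>S. d s \<ge> 0" "m \<ge> 0" "real (card S) \<le> m ^ 2"
    and excess: "(\<Sum>s\<in>S. d s * (d s - m)) \<le> 38 * real (card S) ^ 2"
  shows "(\<Sum>s\<in>S. d s) \<le> 8 * m * real (card S)"
proof (rule ccontr)
  define n where "n = real (card S)"
  define D where "D = (\<Sum>s\<in>S. d s)"
  assume "\<not> D \<le> 8 * m * n"
  then have big: "D > 8 * m * n"
    by simp
  have "n \<ge> 0"
    by (simp add: n_def)
  have "0 \<le> 8 * m * n"
    using \<open>n \<ge> 0\<close> assms(3) by simp
  have "(\<Sum>s\<in>S. d s ^ 2) = (\<Sum>s\<in>S. d s * (d s - m) + m * d s)"
    by (simp add: power2_eq_square algebra_simps)
  also have "\<dots> = (\<Sum>s\<in>S. d s * (d s - m)) + m * D"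
    by (simp add: D_def sum.distrib sum_distrib_left)
  finally have "(\<Sum>s\<in>S. d s ^ 2) = (\<Sum>s\<in>S. d s * (d s - m)) + m * D" .
  then have "(\<Sum>s\<in>S. d s ^ 2) * n \<le> (38 * n ^ 2 + m * D) * n"
    using excess \<open>n \<ge> 0\<close> by (intro mult_right_mono) (simp_all add: n_def)
  moreover have "D ^ 2 \<le> (\<Sum>s\<in>S. d s ^ 2) * n"
    unfolding D_def n_def by (rule sum_squared_le_sum_of_squares)
  ultimately have "D ^ 2 \<le> (38 * n ^ 2 + m * D) * n"
    by linarith
  then have "D * (D - m * n) \<le> 38 * n ^ 3"
    by (simp add: power2_eq_square power3_eq_cube algebra_simps)
  moreover have "(8 * m * n) * (7 * m * n) < D * (D - m * n)"
    using big \<open>0 \<le> 8 * m * n\<close> by (intro mult_strict_mono) auto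
  moreover have "56 * n ^ 3 \<le> (8 * m * n) * (7 * m * n)"
    using assms(4) \<open>n \<ge> 0\<close> mult_right_mono[of n "m ^ 2" "56 * n ^ 2"]
    by (simp add: n_def power2_eq_square power3_eq_cube algebra_simps)
  ultimately have "56 * n ^ 3 < 38 * n ^ 3"
    by linarith
  then show False
    using \<open>n \<ge> 0\<close> by simp
qed

lemma sum_rational_polar_cherries_le:
  fixes S :: "complex set"
  assumes "finite S"
  shows "(\<Sum>s\<in>S. \<Sum>q1\<in>S. \<Sum>q2\<in>S. of_bool (rational_polar (q1 - s) \<and> rational_polar (q2 - s)
            \<and> q2 \<notin> line_through s q1)) \<le> 38 * real (card S) ^ 2"
proof -
  define P where "P s q1 q2 \<longleftrightarrow>
    rational_polar (q1 - s) \<and> rational_polar (q2 - s) \<and> q2 \<notin> line_through s q1" for s q1 q2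
  have apexes: "(\<Sum>s\<in>S. of_bool (P s q1 q2)) \<le> (38 :: real)" for q1 q2
  proof -
    define A where "A = {s. rational_polar (s - q1) \<and> rational_polar (q2 - s) \<and> q2 \<notin> line_through s q1}"
    have "finite A" "card A \<le> 38"
      using rational_polar_apexes_card_le[of q1 q2] by (simp_all add: A_def)
    moreover have "S \<inter> {s. P s q1 q2} \<subseteq> A"
      using rational_polar_uminus[of "q1 - _"] by (auto simp: A_def P_def)
    ultimately have "card (S \<inter> {s. P s q1 q2}) \<le> 38"
      using card_mono by (metis order_trans)
    then show ?thesis
      using assms by simp
  qed
  have "(\<Sum>s\<in>S. \<Sum>q1\<in>S. \<Sum>q2\<in>S. of_bool (P s q1 q2))
      = (\<Sum>q1\<in>S. \<Sum>s\<in>S. \<Sum>q2\<in>S. of_bool (P s q1 q2) :: real)"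
    by (rule sum.swap)
  also have "\<dots> = (\<Sum>q1\<in>S. \<Sum>q2\<in>S. \<Sum>s\<in>S. of_bool (P s q1 q2))"
    by (intro sum.cong refl sum.swap)
  also have "\<dots> \<le> (\<Sum>q1\<in>S. \<Sum>q2\<in>S. 38)"
    by (intro sum_mono apexes)
  also have "\<dots> = 38 * real (card S) ^ 2"
    by (simp add: power2_eq_square)
  finally show ?thesis
    by (simp add: P_def)
qed

lemma sum_rational_polar_degrees_le:
  fixes S :: "complex set"
  assumes "finite S" "m \<ge> 0" "real (card S) \<le> m ^ 2"
    and lines: "\<And>L. is_line L \<Longrightarrow> real (card (S \<inter> L)) \<le> m"
  shows "(\<Sum>s\<in>S. real (card {q \<in> S. rational_polar (q - s)})) \<le> 8 * m * real (card S)"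
proof (rule sum_le_of_sum_mult_excess_le[OF assms(1) _ assms(2,3)])
  have "real (card (S \<inter> line_through s q)) \<le> m" if "rational_polar (q - s)" for s q
    using rational_polar_nonzero[OF that] is_line_line_through[of s q] lines by simp
  then have "(\<Sum>s\<in>S. real (card {q \<in> S. rational_polar (q - s)})
        * (real (card {q \<in> S. rational_polar (q - s)}) - m))
      \<le> (\<Sum>s\<in>S. \<Sum>q1\<in>S. \<Sum>q2\<in>S. of_bool (rational_polar (q1 - s)
        \<and> rational_polar (q2 - s) \<and> q2 \<notin> line_through s q1))"
    using assms(1) by (intro sum_mono degree_mult_excess_le_cherries)
  also have "\<dots> \<le> 38 * real (card S) ^ 2"
    by (rule sum_rational_polar_cherries_le[OF assms(1)])
  finally show "(\<Sum>s\<in>S. real (card {q \<in> S. rational_polar (q - s)})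
      * (real (card {q \<in> S. rational_polar (q - s)}) - m)) \<le> 38 * real (card S) ^ 2" .
qed simp

lemma card_rational_polar_pairs:
  fixes S :: "complex set"
  assumes "finite S"
  shows "2 * real (card {{p, q} | p q. p \<in> S \<and> q \<in> S \<and> rational_polar (q - p)})
    = (\<Sum>s\<in>S. real (card {q \<in> S. rational_polar (q - s)}))"
proof -
  have "2 * card {{p, q} | p q. p \<in> S \<and> q \<in> S \<and> rational_polar (q - p)}
      = card {(p, q). p \<in> S \<and> q \<in> S \<and> rational_polar (q - p)}"
  proof (rule card_doubleton_pairs[OF assms])
    show "rational_polar (p - q)" if "rational_polar (q - p)" for p q
      using rational_polar_uminus[OF that] by simp
    show "\<not> rational_polar (p - p)" for p
      using rational_polar_nonzero[of 0] by auto
  qed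
  also have "{(p, q). p \<in> S \<and> q \<in> S \<and> rational_polar (q - p)}
      = Sigma S (\<lambda>s. {q \<in> S. rational_polar (q - s)})"
    by auto
  finally have "2 * card {{p, q} | p q. p \<in> S \<and> q \<in> S \<and> rational_polar (q - p)}
      = (\<Sum>s\<in>S. card {q \<in> S. rational_polar (q - s)})"
    using assms by simp
  then have "real (2 * card {{p, q} | p q. p \<in> S \<and> q \<in> S \<and> rational_polar (q - p)})
      = real (\<Sum>s\<in>S. card {q \<in> S. rational_polar (q - s)})"
    by (rule arg_cong)
  then show ?thesis
    by simp
qed

theorem theorem4:
  fixes S :: "complex set" and n :: nat and \<alpha> :: real
  assumes "1/2 \<le> \<alpha>" and "\<alpha> \<le> 1"
    and "n \<ge> 1"
    and "finite S" and "card S = n"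
    and "\<And>L. is_line L \<Longrightarrow> real (card (S \<inter> L)) \<le> real n powr \<alpha>"
  shows "real (card {{p, q} | p q. p \<in> S \<and> q \<in> S \<and> p \<noteq> q \<and>
            cmod (p - q) \<in> \<rat> \<and> rational_angle p q})
         \<le> 4 * real n powr (1 + \<alpha>)"
proof -
  define m where "m = real n powr \<alpha>"
  have "real n \<le> m ^ 2"
    using assms(1,3) powr_mono[of 1 "2 * \<alpha>" "real n"]
    by (simp add: m_def power2_eq_square flip: powr_add)
  then have "(\<Sum>s\<in>S. real (card {q \<in> S. rational_polar (q - s)})) \<le> 8 * m * real n"
    using sum_rational_polar_degrees_le[OF assms(4), of m] assms(5,6) by (simp add: m_def)
  moreover have "4 * m * real n = 4 * real n powr (1 + \<alpha>)"
    using assms(3) by (simp add: m_def powr_add)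
  ultimately show ?thesis
    using card_rational_polar_pairs[OF assms(4)] by (simp add: rational_polar_iff)
qed

end
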